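(* Let $\mathcal{X}$ be a finite set of actions, $\mathcal{Y}$ a finite set of responses, $\mathcal{H}\subseteq\mathcal{Y}^{\mathcal{X}}$, $\mathrm{cost}:\mathcal{X}\times\mathcal{Y}\to\mathbb{R}_+$. Let $f:2^{\mathcal{X}\times\mathcal{Y}}\to\mathbb{R}_+$ and $Q>0$; suppose $f$ is submodular, $f(\emptyset)=0$, and $f$ is consistency-aware for $Q$. Then there exists $x\in\mathcal{X}$ such that $$u^f(x,\emptyset)\ge\frac{Q}{2\min(g_{\mathrm{cost}},R_{\mathrm{cost}})\,\mathrm{OPT}}.$$
   Context: The true state is an unknown $h^*\in\mathcal{H}$. An interactive algorithm, given the observed set $S$ of action-response pairs, either selects an action $x$ (observing $(x,h^*(x))$) or terminates; $S^h[\mathcal{A}]$ is the set collected until termination when $h^*=h$; $\mathrm{cost}(\mathcal{A})=\max_{h\in\mathcal{H}}\sum_{(x,y)\in S^h[\mathcal{A}]}\mathrm{cost}(x,y)$; $\mathrm{OPT}$ is the minimum of $\mathrm{cost}(\mathcal{A})$ over interactive algorithms with $f(S^h[\mathcal{A}])\ge Q$ for all $h\in\mathcal{H}$. Version space $V(S)=\{h\in\mathcal{H}\mid\forall(x,y)\in S,\ y=h(x)\}$. $f$ is consistency-aware for $Q$ if $f(S)\ge Q$ whenever $V(S)=\emptyset$. $\delta_g(z\mid A)=g(A\cup\{z\})-g(A)$; $u^f(x,S)=\min_{h\in V(S)}\frac{\delta_{\min(f,Q)}((x,h(x))\mid S)}{\mathrm{cost}(x,h(x))}$. $R_{\mathrm{cost}}=\max_x\frac{\max_y\mathrm{cost}(x,y)}{\min_y\mathrm{cost}(x,y)}$.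 With $\phi(x)$ the second-smallest value of the multiset $\{\mathrm{cost}(x,y)\mid y\in\mathcal{Y}\}$, $\phi_{\min}=\min_x\phi(x)$ and $c_{\max}=\max_{(x,y)}\mathrm{cost}(x,y)$, $g_{\mathrm{cost}}=c_{\max}/\phi_{\min}$. *)

theory Defs
  imports Main "HOL-Library.Extended_Real" "HOL-Library.Multiset"
begin

type_synonym ('x, 'y) alg = "('x \<times> 'y) set \<Rightarrow> 'x option"

definition version_space :: "('x \<Rightarrow> 'y) set \<Rightarrow> ('x \<times> 'y) set \<Rightarrow> ('x \<Rightarrow> 'y) set" where
  "version_space H S = {h \<in> H. \<forall>(x, y) \<in> S. y = h x}"

definition consistency_aware :: "('x \<Rightarrow> 'y) set \<Rightarrow> (('x \<times> 'y) set \<Rightarrow> real) \<Rightarrow> real \<Rightarrow> bool" where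
  "consistency_aware H f Q \<longleftrightarrow> (\<forall>S. version_space H S = {} \<longrightarrow> f S \<ge> Q)"

definition submodular :: "('a set \<Rightarrow> real) \<Rightarrow> bool" where
  "submodular f \<longleftrightarrow> (\<forall>A B. f (A \<union> B) + f (A \<inter> B) \<le> f A + f B)"

definition delta :: "('a set \<Rightarrow> real) \<Rightarrow> 'a \<Rightarrow> 'a set \<Rightarrow> real" where
  "delta g z A = g (insert z A) - g A"

definition u_score :: "('x \<Rightarrow> 'y) set \<Rightarrow> (('x \<times> 'y) set \<Rightarrow> real) \<Rightarrow> real
    \<Rightarrow> ('x \<Rightarrow> 'y \<Rightarrow> real) \<Rightarrow> 'x \<Rightarrow> ('x \<times> 'y) set \<Rightarrow> real" where
  "u_score H f Q cost x S =
     Min ((\<lambda>h. delta (\<lambda>T. min (f T) Q) (x, h x) S / cost x (h x)) ` version_space H S)"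

fun run :: "('x, 'y) alg \<Rightarrow> ('x \<Rightarrow> 'y) \<Rightarrow> nat \<Rightarrow> ('x \<times> 'y) set" where
  "run A h 0 = {}"
| "run A h (Suc n) = (case A (run A h n) of None \<Rightarrow> run A h n
                       | Some x \<Rightarrow> insert (x, h x) (run A h n))"

definition terminates :: "('x, 'y) alg \<Rightarrow> ('x \<Rightarrow> 'y) \<Rightarrow> bool" where
  "terminates A h \<longleftrightarrow> (\<exists>n. A (run A h n) = None)"

definition collected :: "('x, 'y) alg \<Rightarrow> ('x \<Rightarrow> 'y) \<Rightarrow> ('x \<times> 'y) set" where
  "collected A h = run A h (LEAST n. A (run A h n) = None)"

definition feasible :: "('x \<Rightarrow> 'y) set \<Rightarrow> (('x \<times> 'y) set \<Rightarrow> real) \<Rightarrow> real \<Rightarrow> ('x, 'y) alg \<Rightarrow> bool" where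
  "feasible H f Q A \<longleftrightarrow> (\<forall>h \<in> H. terminates A h \<and> f (collected A h) \<ge> Q)"

definition alg_cost :: "('x \<Rightarrow> 'y) set \<Rightarrow> ('x \<Rightarrow> 'y \<Rightarrow> real) \<Rightarrow> ('x, 'y) alg \<Rightarrow> real" where
  "alg_cost H cost A = Max ((\<lambda>h. \<Sum>(x, y) \<in> collected A h. cost x y) ` H)"

text \<open>OPT, as an extended real (infinite if no feasible algorithm exists).\<close>
definition OPT :: "('x \<Rightarrow> 'y) set \<Rightarrow> (('x \<times> 'y) set \<Rightarrow> real) \<Rightarrow> real
    \<Rightarrow> ('x \<Rightarrow> 'y \<Rightarrow> real) \<Rightarrow> ereal" where
  "OPT H f Q cost = (INF A \<in> {A. feasible H f Q A}. ereal (alg_cost H cost A))"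

definition R_cost :: "('x::finite \<Rightarrow> 'y::finite \<Rightarrow> real) \<Rightarrow> real" where
  "R_cost cost = Max (range (\<lambda>x. Max (range (cost x)) / Min (range (cost x))))"

text \<open>Second-smallest value of the multiset of costs of action x.\<close>
definition phi :: "('x \<Rightarrow> 'y::finite \<Rightarrow> real) \<Rightarrow> 'x \<Rightarrow> real" where
  "phi cost x = sorted_list_of_multiset (image_mset (cost x) (mset_set UNIV)) ! 1"

definition g_cost :: "('x::finite \<Rightarrow> 'y::finite \<Rightarrow> real) \<Rightarrow> real" where
  "g_cost cost = Max (range (\<lambda>(x, y). cost x y)) / Min (range (phi cost))"

end

theory Submission
  imports Defs
begin

text \<open>Let m = min g_cost R_cost and suppose every action scores below t = Q / (2 m OPT). Then
  each action x has a response g x, realised by some hypothesis, with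
  min (f {(x, g x)}) Q < t cost (x, g x), and by submodularity every g-consistent set S with
  f S \<ge> Q satisfies Q < t cost S. Run an optimal algorithm against the responses g. If some
  hypothesis survives until termination, the collected set is such an S of cost at most OPT.
  Otherwise, at the query x eliminating the last consistent hypothesis h, the set collected so far
  plus (x, g x) reaches Q by consistency awareness and costs at most OPT + m OPT: cost (x, g x) is
  at most R_cost cost (x, h x), and at most g_cost times the smallest second-cheapest cost, which
  is itself at most OPT since otherwise every action would have a unique response affordable
  within OPT and no hypothesis could be eliminated. Either way Q < t (2 m OPT) = Q.\<close>

abbreviation total_cost :: "('x \<Rightarrow> 'y \<Rightarrow> real) \<Rightarrow> ('x \<times> 'y) set \<Rightarrow> real" where
  "total_cost cost S \<equiv> \<Sum>(x, y)\<in>S. cost x y"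

subsection \<open>Runs of an interactive algorithm\<close>

lemma run_mono: "n \<le> m \<Longrightarrow> run A h n \<subseteq> run A h m"
  by (induction m rule: dec_induct) (auto split: option.split)

lemma run_stable: "A (run A h n) = None \<Longrightarrow> run A h (n + k) = run A h n"
  by (induction k) auto

lemma run_consistent: "(x, y) \<in> run A h n \<Longrightarrow> y = h x"
  by (induction n) (auto split: option.splits)

lemma run_eq_if_consistent:
  "\<forall>(x, y)\<in>run A g n. y = h x \<Longrightarrow> run A h n = run A g n"
proof (induction n)
  case (Suc n)
  then have IH: "run A h n = run A g n"
    using run_mono[of n "Suc n" A g] by fastforce
  show ?case
  proof (cases "A (run A g n)")
    case (Some x)
    then have "h x = g x" using Suc.prems by force
    then show ?thesis using IH Some by simp
  qed (use IH in simp)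
qed simp

lemma run_eq_if_unique_response:
  assumes unique: "\<And>z y y'. P z y \<Longrightarrow> P z y' \<Longrightarrow> y = y'"
    and P1: "\<And>k z y. (z, y) \<in> run A h1 k \<Longrightarrow> P z y"
    and P2: "\<And>k z y. (z, y) \<in> run A h2 k \<Longrightarrow> P z y"
  shows "run A h1 n = run A h2 n"
proof (induction n)
  case (Suc n)
  show ?case
  proof (cases "A (run A h1 n)")
    case (Some z)
    have "(z, h1 z) \<in> run A h1 (Suc n)" "(z, h2 z) \<in> run A h2 (Suc n)"
      using Some Suc.IH by simp_all
    then have "h1 z = h2 z" using unique P1 P2 by blast
    then show ?thesis using Some Suc.IH by simp
  qed (use Suc.IH in simp)
qed simp

lemma collected_eq_run:
  assumes "A (run A h n) = None"
  shows "collected A h = run A h n"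
proof -
  let ?N = "LEAST n. A (run A h n) = None"
  have "?N \<le> n" using assms by (rule Least_le)
  moreover have "run A h (?N + (n - ?N)) = run A h ?N"
    using assms by (intro run_stable LeastI)
  ultimately show ?thesis unfolding collected_def by simp
qed

lemma run_subset_collected:
  assumes "terminates A h"
  shows "run A h n \<subseteq> collected A h"
proof -
  obtain N where N: "A (run A h N) = None" using assms unfolding terminates_def by blast
  have "run A h n \<subseteq> run A h (max n N)" by (rule run_mono) simp
  also have "\<dots> = run A h N"
    using run_stable[where A=A and h=h and n=N and k="max n N - N", OF N] by simp
  finally show ?thesis using collected_eq_run[where A=A and h=h, OF N] by simp
qed

lemma runs_stop_uniformly:
  assumes "finite H" "\<forall>h\<in>H. terminates A h"
  obtains M where "\<And>h. h \<in> H \<Longrightarrow> collected A h = run A h M"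
proof
  define N where "N h = (LEAST n. A (run A h n) = None)" for h
  fix h assume h: "h \<in> H"
  have N: "A (run A h (N h)) = None"
    unfolding N_def by (rule LeastI_ex) (use assms(2) h in \<open>auto simp: terminates_def\<close>)
  have "N h \<le> Max (N ` H)" using assms(1) h by simp
  then have "run A h (Max (N ` H)) = run A h (N h)"
    using run_stable[where A=A and h=h and n="N h" and k="Max (N ` H) - N h", OF N] by simp
  then show "collected A h = run A h (Max (N ` H))"
    using collected_eq_run[where A=A and h=h, OF N] by simp
qed

lemma run_consistent_or_diverges:
  assumes "H \<noteq> {}"
  obtains "version_space H (run A g n) \<noteq> {}"
  | k h x where "h \<in> H" "run A h k = run A g k" "A (run A g k) = Some x" "h x \<noteq> g x"
      "version_space H (run A g (Suc k)) = {}"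
proof (cases "version_space H (run A g n) = {}")
  case True
  moreover have "version_space H (run A g 0) \<noteq> {}"
    using assms unfolding version_space_def by simp
  ultimately obtain k where k: "version_space H (run A g k) \<noteq> {}"
      "version_space H (run A g (Suc k)) = {}"
    using ex_least_nat_less[of "\<lambda>n. version_space H (run A g n) = {}" n] by blast
  then obtain h where h: "h \<in> H" "\<forall>(x, y)\<in>run A g k. y = h x"
    unfolding version_space_def by auto
  have run_h: "run A h k = run A g k" using h(2) by (rule run_eq_if_consistent)
  obtain x where x: "A (run A g k) = Some x"
    using k by (cases "A (run A g k)") auto
  have diverges: "h x \<noteq> g x"
  proof
    assume "h x = g x"
    then have "h \<in> version_space H (run A g (Suc k))"
      using x h unfolding version_space_def by auto
    with k(2) show False by simp
  qed
  show ?thesis using h(1) run_h x diverges k(2) by (rule that(2))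
qed (use that(1) in blast)

lemma min_submodular_le_sum_singletons:
  fixes f :: "'a set \<Rightarrow> real"
  assumes "submodular f" "f {} = 0" "\<And>S. f S \<ge> 0" "Q \<ge> 0" "finite S"
  shows "min (f S) Q \<le> (\<Sum>z\<in>S. min (f {z}) Q)"
  using assms(5)
proof (induction S rule: finite_induct)
  case (insert z S)
  have "f ({z} \<union> S) + f ({z} \<inter> S) \<le> f {z} + f S"
    using assms(1) unfolding submodular_def by blast
  then have "f (insert z S) \<le> f {z} + f S" using insert assms(2) by simp
  then have "min (f (insert z S)) Q \<le> min (f {z}) Q + min (f S) Q"
    using assms(3)[of "{z}"] assms(3)[of S] assms(4) by linarith
  then show ?case using insert by simp
qed (use assms in simp)

subsection \<open>Cost ratios\<close>

lemma sorted_nth_1_le: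
  fixes L :: "'a::linorder list"
  assumes "sorted L" "2 \<le> length (filter (\<lambda>v. v \<le> b) L)"
  shows "L ! 1 \<le> b"
proof (rule ccontr)
  assume "\<not> L ! 1 \<le> b"
  have "2 \<le> length L" using assms(2) length_filter_le order_trans by blast
  then obtain a0 a1 r where L: "L = a0 # a1 # r"
    by (cases L rule: remdups_adj.cases) auto
  have "\<forall>v\<in>set r. a1 \<le> v" using assms(1) L by simp
  then have "filter (\<lambda>v. v \<le> b) (a1 # r) = []"
    using \<open>\<not> L ! 1 \<le> b\<close> L by (auto simp: filter_empty_conv)
  then have "length (filter (\<lambda>v. v \<le> b) L) \<le> 1" using L by simp
  then show False using assms(2) by simp
qed

lemma phi_le_max:
  fixes cost :: "'x \<Rightarrow> 'y::finite \<Rightarrow> real"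
  assumes "y \<noteq> y'"
  shows "phi cost x \<le> max (cost x y) (cost x y')"
proof -
  let ?M = "image_mset (cost x) (mset_set (UNIV :: 'y set))"
  let ?b = "max (cost x y) (cost x y')"
  have "{y, y'} \<subseteq> {z. cost x z \<le> ?b}" by auto
  then have "2 \<le> card {z. cost x z \<le> ?b}"
    using assms by (metis card_2_iff card_mono finite)
  also have "\<dots> = size (filter_mset (\<lambda>v. v \<le> ?b) ?M)"
    by (simp add: filter_mset_image_mset)
  also have "\<dots> = length (filter (\<lambda>v. v \<le> ?b) (sorted_list_of_multiset ?M))"
    by (metis mset_filter mset_sorted_list_of_multiset size_mset)
  finally show ?thesis unfolding phi_def by (intro sorted_nth_1_le) simp_all
qed

lemma phi_in_range:
  fixes cost :: "'x \<Rightarrow> 'y::finite \<Rightarrow> real"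
  assumes "card (UNIV :: 'y set) \<ge> 2"
  obtains y where "phi cost x = cost x y"
proof -
  let ?L = "sorted_list_of_multiset (image_mset (cost x) (mset_set (UNIV :: 'y set)))"
  have "length ?L = card (UNIV :: 'y set)"
    by (metis mset_sorted_list_of_multiset size_image_mset size_mset size_mset_set)
  then have "1 < length ?L" using assms by simp
  then have "?L ! 1 \<in> set ?L" by (rule nth_mem)
  then have "phi cost x \<in> range (cost x)" unfolding phi_def by simp
  then show ?thesis using that by blast
qed

lemma cost_le_R_cost_mult:
  fixes cost :: "'x::finite \<Rightarrow> 'y::finite \<Rightarrow> real"
  assumes "\<And>x y. cost x y > 0"
  shows "cost x y \<le> R_cost cost * cost x y'"
proof -
  have pos: "Min (range (cost x)) > 0" using assms by simp
  have ratio: "Max (range (cost x)) / Min (range (cost x)) \<le> R_cost cost"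
    unfolding R_cost_def by (rule Max_ge) auto
  then have "Max (range (cost x)) \<le> R_cost cost * Min (range (cost x))"
    using pos by (simp add: divide_le_eq)
  moreover have "0 < Max (range (cost x))" using assms[of x y] by (auto simp: Max_gr_iff)
  then have "R_cost cost \<ge> 0"
    using pos ratio divide_pos_pos[of "Max (range (cost x))" "Min (range (cost x))"] by linarith
  then have "R_cost cost * Min (range (cost x)) \<le> R_cost cost * cost x y'"
    by (intro mult_left_mono) simp_all
  moreover have "cost x y \<le> Max (range (cost x))" by simp
  ultimately show ?thesis by linarith
qed

lemma Min_phi_attained:
  fixes cost :: "'x::finite \<Rightarrow> 'y::finite \<Rightarrow> real"
  assumes "card (UNIV :: 'y set) \<ge> 2"
  obtains x y where "Min (range (phi cost)) = cost x y"
proof -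
  have "Min (range (phi cost)) \<in> range (phi cost)" by (rule Min_in) auto
  then obtain x where x: "Min (range (phi cost)) = phi cost x" by blast
  obtain y where "phi cost x = cost x y" using phi_in_range[OF assms] .
  then show ?thesis using x that by simp
qed

lemma Min_phi_pos:
  fixes cost :: "'x::finite \<Rightarrow> 'y::finite \<Rightarrow> real"
  assumes "card (UNIV :: 'y set) \<ge> 2" "\<And>x y. cost x y > 0"
  shows "Min (range (phi cost)) > 0"
proof -
  obtain x y where "Min (range (phi cost)) = cost x y" using Min_phi_attained[OF assms(1)] .
  then show ?thesis using assms(2)[of x y] by simp
qed

lemma cost_le_g_cost_mult:
  fixes cost :: "'x::finite \<Rightarrow> 'y::finite \<Rightarrow> real"
  assumes "card (UNIV :: 'y set) \<ge> 2" "\<And>x y. cost x y > 0"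
  shows "cost x y \<le> g_cost cost * Min (range (phi cost))"
proof -
  have "cost x y \<le> Max (range (\<lambda>(x, y). cost x y))" by (rule Max_ge) auto
  then show ?thesis
    using Min_phi_pos[where cost=cost, OF assms] unfolding g_cost_def by (simp del: Min_gr_iff)
qed

lemma cost_le_min_ratio_mult:
  fixes cost :: "'x::finite \<Rightarrow> 'y::finite \<Rightarrow> real"
  assumes "card (UNIV :: 'y set) \<ge> 2" "\<And>x y. cost x y > 0"
    and "Min (range (phi cost)) \<le> c" "cost x y' \<le> c"
  shows "cost x y \<le> min (g_cost cost) (R_cost cost) * c"
proof -
  have g: "cost x y \<le> g_cost cost * Min (range (phi cost))"
    by (rule cost_le_g_cost_mult[where cost=cost, OF assms(1,2)])
  have "0 < g_cost cost * Min (range (phi cost))" using g assms(2)[of x y] by linarith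
  then have "0 \<le> g_cost cost"
    using Min_phi_pos[where cost=cost, OF assms(1,2)] by (simp add: zero_less_mult_iff)
  with assms(3) have "g_cost cost * Min (range (phi cost)) \<le> g_cost cost * c"
    by (rule mult_left_mono)
  then have "cost x y \<le> g_cost cost * c" using g by linarith
  moreover have R: "cost x y \<le> R_cost cost * cost x y'"
    by (rule cost_le_R_cost_mult[where cost=cost, OF assms(2)])
  have "0 < R_cost cost * cost x y'" using R assms(2)[of x y] by linarith
  then have "0 \<le> R_cost cost" using assms(2)[of x y'] by (simp add: zero_less_mult_iff)
  with assms(4) have "R_cost cost * cost x y' \<le> R_cost cost * c"
    by (rule mult_left_mono)
  then have "cost x y \<le> R_cost cost * c" using R by linarith
  moreover have "0 \<le> c" using assms(2)[of x y'] assms(4) by linarith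
  ultimately show ?thesis by (simp add: min_mult_distrib_right)
qed

lemma one_le_min_ratio:
  fixes cost :: "'x::finite \<Rightarrow> 'y::finite \<Rightarrow> real"
  assumes "card (UNIV :: 'y set) \<ge> 2" "\<And>x y. cost x y > 0"
  shows "1 \<le> min (g_cost cost) (R_cost cost)"
proof -
  obtain x y where "Min (range (phi cost)) = cost x y" using Min_phi_attained[OF assms(1)] .
  then have "cost x y \<le> min (g_cost cost) (R_cost cost) * cost x y"
    by (intro cost_le_min_ratio_mult[where cost=cost and y'=y, OF assms]) simp_all
  then show ?thesis using assms(2)[of x y] by simp
qed

lemma response_unique_below_Min_phi:
  fixes cost :: "'x::finite \<Rightarrow> 'y::finite \<Rightarrow> real"
  assumes "c < Min (range (phi cost))" "cost x y \<le> c" "cost x y' \<le> c"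
  shows "y = y'"
proof (rule ccontr)
  assume "y \<noteq> y'"
  then have "phi cost x \<le> c" using phi_le_max[of y y' cost x] assms(2,3) by linarith
  moreover have "Min (range (phi cost)) \<le> phi cost x" by (rule Min_le) auto
  ultimately show False using assms(1) by linarith
qed

lemma total_cost_run_le_alg_cost:
  fixes H :: "('x::finite \<Rightarrow> 'y::finite) set"
  assumes "feasible H f Q A" "h \<in> H" "\<And>x y. cost x y \<ge> 0"
  shows "total_cost cost (run A h n) \<le> alg_cost H cost A"
proof -
  have "terminates A h" using assms(1,2) unfolding feasible_def by blast
  then have "run A h n \<subseteq> collected A h" by (rule run_subset_collected)
  then have "total_cost cost (run A h n) \<le> total_cost cost (collected A h)"
    by (intro sum_mono2) (use assms(3) in auto)
  also have "\<dots> \<le> alg_cost H cost A"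
    unfolding alg_cost_def using assms(2) by (intro Max_ge) auto
  finally show ?thesis .
qed

lemma cost_le_alg_cost:
  fixes H :: "('x::finite \<Rightarrow> 'y::finite) set"
  assumes "feasible H f Q A" "h \<in> H" "\<And>x y. cost x y \<ge> 0" "(x, y) \<in> run A h n"
  shows "cost x y \<le> alg_cost H cost A"
proof -
  have "cost x y \<le> total_cost cost (run A h n)"
    using member_le_sum[of "(x, y)" "run A h n" "\<lambda>(x, y). cost x y"] assms(3,4) by auto
  then show ?thesis
    using total_cost_run_le_alg_cost[where cost=cost and n=n, OF assms(1-3)] by linarith
qed

lemma alg_cost_pos:
  fixes H :: "('x::finite \<Rightarrow> 'y::finite) set"
  assumes "feasible H f Q A" "h \<in> H" "f {} < Q" "\<And>x y. cost x y > 0"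
  shows "alg_cost H cost A > 0"
proof -
  have "Q \<le> f (collected A h)" using assms(1,2) unfolding feasible_def by blast
  then have "collected A h \<noteq> {}" using assms(3) by auto
  then have "0 < total_cost cost (collected A h)" by (intro sum_pos) (auto intro: assms(4))
  also have "\<dots> \<le> alg_cost H cost A"
    unfolding alg_cost_def using assms(2) by (intro Max_ge) auto
  finally show ?thesis .
qed

lemma runs_agree_below_Min_phi:
  fixes H :: "('x::finite \<Rightarrow> 'y::finite) set"
  assumes "feasible H f Q A" "\<And>x y. cost x y > 0"
    and "alg_cost H cost A < Min (range (phi cost))" "h1 \<in> H" "h2 \<in> H"
  shows "run A h1 n = run A h2 n"
proof (rule run_eq_if_unique_response)
  let ?P = "\<lambda>z y. cost z y \<le> alg_cost H cost A"
  show "y = y'" if "?P z y" "?P z y'" for z y y'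
    using assms(3) that by (rule response_unique_below_Min_phi)
  show "?P z y" if "(z, y) \<in> run A h1 k" for k z y
    using assms(1,4) _ that by (rule cost_le_alg_cost) (use assms(2) less_imp_le in blast)
  show "?P z y" if "(z, y) \<in> run A h2 k" for k z y
    using assms(1,5) _ that by (rule cost_le_alg_cost) (use assms(2) less_imp_le in blast)
qed

lemma Min_phi_le_alg_cost_if_distinguishing:
  fixes H :: "('x::finite \<Rightarrow> 'y::finite) set"
  assumes "feasible H f Q A" "\<And>x y. cost x y > 0"
    and "h \<in> H" "h' \<in> H" "A (run A h k) = Some x" "h x \<noteq> h' x"
  shows "Min (range (phi cost)) \<le> alg_cost H cost A"
proof (rule ccontr)
  assume "\<not> ?thesis"
  then have agree: "run A h' n = run A h n" for n
    by (intro runs_agree_below_Min_phi[where cost=cost, OF assms(1,2) _ assms(4,3)])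
      (simp only: not_le)
  have "(x, h' x) \<in> run A h' (Suc k)" using agree[of k] assms(5) by simp
  then have "(x, h' x) \<in> run A h (Suc k)" by (simp only: agree)
  then show False using assms(6) run_consistent by metis
qed

lemma OPT_attained:
  fixes H :: "('x::finite \<Rightarrow> 'y::finite) set"
  assumes "H \<noteq> {}" "{A. feasible H f Q A} \<noteq> {}"
  obtains A where "feasible H f Q A" "OPT H f Q cost = ereal (alg_cost H cost A)"
proof -
  define V where "V = (\<lambda>A. ereal (alg_cost H cost A)) ` {A. feasible H f Q A}"
  have "alg_cost H cost A \<in> range (total_cost cost)" for A
  proof -
    have "alg_cost H cost A \<in> (\<lambda>h. total_cost cost (collected A h)) ` H"
      unfolding alg_cost_def using assms(1) by (intro Max_in) auto
    then show ?thesis by auto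
  qed
  then have "V \<subseteq> ereal ` range (total_cost cost)" unfolding V_def by auto
  then have "finite V" by (rule finite_subset) simp
  moreover have "V \<noteq> {}" using assms(2) unfolding V_def by simp
  ultimately have "Inf V \<in> V" by (simp add: cInf_eq_Min)
  moreover have "OPT H f Q cost = Inf V" unfolding OPT_def V_def by simp
  ultimately show ?thesis using that unfolding V_def by auto
qed

subsection \<open>The adversarial response function\<close>

lemma exists_consistent_set_within_budget:
  fixes H :: "('x::finite \<Rightarrow> 'y::finite) set"
    and cost :: "'x \<Rightarrow> 'y \<Rightarrow> real"
  assumes Y2: "card (UNIV :: 'y set) \<ge> 2" and cpos: "\<And>x y. cost x y > 0"
    and feas: "feasible H f Q A" and ca: "consistency_aware H f Q" and "H \<noteq> {}"
    and realised: "\<And>x. \<exists>h\<in>H. h x = g x"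
  obtains S where "\<forall>(x, y)\<in>S. y = g x" "Q \<le> f S"
    "total_cost cost S \<le> 2 * min (g_cost cost) (R_cost cost) * alg_cost H cost A"
proof -
  define m where "m = min (g_cost cost) (R_cost cost)"
  define oc where "oc = alg_cost H cost A"
  have m1: "1 \<le> m" unfolding m_def by (rule one_le_min_ratio[where cost=cost, OF Y2 cpos])
  have cnn: "\<And>x y. cost x y \<ge> 0" using cpos less_imp_le by blast
  have run_oc: "total_cost cost (run A h n) \<le> oc" if "h \<in> H" for h n
    unfolding oc_def using feas that cnn by (rule total_cost_run_le_alg_cost)
  have oc0: "0 \<le> oc" using run_oc[of _ 0] \<open>H \<noteq> {}\<close> by auto
  have oc_le: "oc \<le> m * oc" using mult_right_mono[of 1 m oc] m1 oc0 by simp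
  have g_run: "\<forall>(x, y)\<in>run A g k. y = g x" for k by (auto dest: run_consistent)
  have "\<forall>h\<in>H. terminates A h" using feas unfolding feasible_def by blast
  then obtain M where M: "\<And>h. h \<in> H \<Longrightarrow> collected A h = run A h M"
    using runs_stop_uniformly[OF finite] by blast
  from run_consistent_or_diverges[OF \<open>H \<noteq> {}\<close>, of A g M] show ?thesis
  proof cases
    case 1
    then obtain h where h: "h \<in> H" "\<forall>(x, y)\<in>run A g M. y = h x"
      unfolding version_space_def by auto
    have "collected A h = run A g M" using M[OF h(1)] run_eq_if_consistent[OF h(2)] by simp
    then have "Q \<le> f (run A g M)" using feas h(1) unfolding feasible_def by auto
    moreover have "total_cost cost (run A g M) \<le> 2 * m * oc"
      using run_oc[OF h(1), of M] run_eq_if_consistent[OF h(2)] oc_le oc0 by simp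
    ultimately show ?thesis using that g_run unfolding m_def oc_def by blast
  next
    case (2 k h x)
    let ?S = "run A g k"
    have "Q \<le> f (run A g (Suc k))" using ca 2(5) unfolding consistency_aware_def by blast
    then have reach: "Q \<le> f (insert (x, g x) ?S)" using 2(3) by simp
    have "(x, h x) \<notin> ?S" using 2(4) g_run by auto
    then have budget: "cost x (h x) + total_cost cost ?S \<le> oc"
      using run_oc[OF 2(1), of "Suc k"] 2(2,3) by simp
    have S_nonneg: "0 \<le> total_cost cost ?S" by (intro sum_nonneg) (auto simp: cnn)
    obtain h' where h': "h' \<in> H" "h' x = g x" using realised by blast
    have "A (run A h k) = Some x" using 2(2,3) by simp
    with feas cpos 2(1) h'(1) have "Min (range (phi cost)) \<le> oc"
      unfolding oc_def using 2(4)[folded h'(2)] by (rule Min_phi_le_alg_cost_if_distinguishing)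
    moreover have "cost x (h x) \<le> oc" using budget S_nonneg by linarith
    ultimately have "cost x (g x) \<le> m * oc"
      unfolding m_def by (rule cost_le_min_ratio_mult[OF Y2 cpos])
    have "total_cost cost (insert (x, g x) ?S) \<le> cost x (g x) + total_cost cost ?S"
      by (cases "(x, g x) \<in> ?S") (simp_all add: insert_absorb cnn)
    also have "\<dots> \<le> m * oc + oc"
      using \<open>cost x (g x) \<le> m * oc\<close> budget cpos[of x "h x"] by linarith
    also have "\<dots> \<le> 2 * m * oc" using oc_le by simp
    finally have "total_cost cost (insert (x, g x) ?S) \<le> 2 * m * oc" .
    then show ?thesis using that[OF _ reach] g_run unfolding m_def oc_def by auto
  qed
qed

lemma u_score_empty:
  assumes "f {} = 0" "Q \<ge> 0"
  shows "u_score H f Q cost x {} = Min ((\<lambda>h. min (f {(x, h x)}) Q / cost x (h x)) ` H)"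
  using assms unfolding u_score_def delta_def version_space_def by simp

lemma u_score_empty_nonneg:
  fixes H :: "('x::finite \<Rightarrow> 'y::finite) set"
  assumes "H \<noteq> {}" "f {} = 0" "\<And>S. f S \<ge> 0" "Q \<ge> 0" "\<And>x y. cost x y > 0"
  shows "0 \<le> u_score H f Q cost x {}"
  unfolding u_score_empty[where f=f, OF assms(2,4)] using assms(1,3-5)
  by (auto intro: divide_nonneg_pos)

lemma nonempty_if_consistency_aware:
  assumes "consistency_aware H f Q" "f {} < Q"
  shows "H \<noteq> {}"
proof
  assume "H = {}"
  then have "Q \<le> f {}" using assms(1) unfolding consistency_aware_def version_space_def by blast
  then show False using assms(2) by simp
qed

lemma exists_response_below_score:
  assumes "H \<noteq> {}" "finite H" "f {} = 0" "Q \<ge> 0" "\<And>x y. cost x y > 0"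
    and "u_score H f Q cost x {} < t"
  obtains h where "h \<in> H" "min (f {(x, h x)}) Q < t * cost x (h x)"
proof -
  have "u_score H f Q cost x {} \<in> (\<lambda>h. min (f {(x, h x)}) Q / cost x (h x)) ` H"
    unfolding u_score_empty[where f=f, OF assms(3,4)] using assms(1,2) by (intro Min_in) auto
  then show ?thesis using that assms(5,6) by (auto simp: divide_less_eq)
qed

lemma lt_total_cost_if_consistent_pairs_below:
  fixes f :: "('x \<times> 'y) set \<Rightarrow> real"
  assumes "submodular f" "f {} = 0" "\<And>S. f S \<ge> 0" "Q > 0" "finite S" "Q \<le> f S"
    and below: "\<And>x y. (x, y) \<in> S \<Longrightarrow> min (f {(x, y)}) Q < t * cost x y"
  shows "Q < t * total_cost cost S"
proof -
  have "S \<noteq> {}" using assms(2,4,6) by auto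
  have "Q = min (f S) Q" using assms(6) by simp
  also have "\<dots> \<le> (\<Sum>z\<in>S. min (f {z}) Q)"
    using assms(1-3) less_imp_le[OF assms(4)] assms(5) by (rule min_submodular_le_sum_singletons)
  also have "\<dots> < (\<Sum>(x, y)\<in>S. t * cost x y)"
    using \<open>S \<noteq> {}\<close> assms(5) below by (intro sum_strict_mono) auto
  also have "\<dots> = t * total_cost cost S" by (simp add: sum_distrib_left case_prod_unfold)
  finally show ?thesis .
qed

lemma exists_u_score_ge:
  fixes H :: "('x::finite \<Rightarrow> 'y::finite) set"
    and cost :: "'x \<Rightarrow> 'y \<Rightarrow> real"
  assumes Y2: "card (UNIV :: 'y set) \<ge> 2" and cpos: "\<And>x y. cost x y > 0"
    and fnn: "\<And>S. f S \<ge> 0" and "Q > 0" and "submodular f" and "f {} = 0"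
    and ca: "consistency_aware H f Q" and feas: "feasible H f Q A"
  shows "\<exists>x. Q / (2 * min (g_cost cost) (R_cost cost) * alg_cost H cost A)
           \<le> u_score H f Q cost x {}"
proof (rule ccontr)
  define budget where "budget = 2 * min (g_cost cost) (R_cost cost) * alg_cost H cost A"
  define t where "t = Q / budget"
  have Hne: "H \<noteq> {}"
    using ca \<open>f {} = 0\<close> \<open>Q > 0\<close> by (intro nonempty_if_consistency_aware[where f=f]) simp_all
  then obtain h0 where "h0 \<in> H" by blast
  then have "0 < alg_cost H cost A"
    using feas \<open>f {} = 0\<close> \<open>Q > 0\<close> cpos by (intro alg_cost_pos[where f=f]) simp_all
  then have "0 < budget"
    unfolding budget_def using one_le_min_ratio[where cost=cost, OF Y2 cpos] by simp
  then have t_nonneg: "0 \<le> t" and t_budget: "t * budget = Q"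
    unfolding t_def using \<open>Q > 0\<close> by simp_all
  assume "\<not> ?thesis"
  then have low: "u_score H f Q cost x {} < t" for x
    unfolding t_def budget_def by (simp add: not_le)
  have "\<exists>h. h \<in> H \<and>
      min (f {(x, h x)}) Q < t * cost x (h x)" for x
    using Hne finite \<open>f {} = 0\<close> less_imp_le[OF \<open>Q > 0\<close>] cpos low
    by (rule exists_response_below_score[where f=f and cost=cost]) blast
  then obtain bad where bad: "\<And>x. bad x \<in> H"
      "\<And>x. min (f {(x, bad x x)}) Q < t * cost x (bad x x)"
    by metis
  define g where "g x = bad x x" for x
  have realised: "\<exists>h\<in>H. h x = g x" for x using bad(1) unfolding g_def by blast
  obtain S where S: "\<forall>(x, y)\<in>S. y = g x" "Q \<le> f S" "total_cost cost S \<le> budget"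
    unfolding budget_def
    by (rule exists_consistent_set_within_budget[where cost=cost, OF Y2 cpos feas ca Hne realised])
  have "Q < t * total_cost cost S"
    using \<open>submodular f\<close> \<open>f {} = 0\<close> fnn \<open>Q > 0\<close> finite S(2)
  proof (rule lt_total_cost_if_consistent_pairs_below)
    show "min (f {(x, y)}) Q < t * cost x y" if "(x, y) \<in> S" for x y
      using that S(1) bad(2) unfolding g_def by auto
  qed
  also have "\<dots> \<le> Q" using mult_left_mono[OF S(3) t_nonneg] t_budget by simp
  finally show False by simp
qed

theorem lemma6:
  fixes H :: "('x::finite \<Rightarrow> 'y::finite) set"
    and cost :: "'x \<Rightarrow> 'y \<Rightarrow> real"
    and f :: "('x \<times> 'y) set \<Rightarrow> real"
    and Q :: real
  assumes "card (UNIV :: 'y set) \<ge> 2"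
    and "\<And>x y. cost x y > 0"
    and "\<And>S. f S \<ge> 0"
    and "Q > 0"
    and "submodular f"
    and "f {} = 0"
    and "consistency_aware H f Q"
  shows "\<exists>x. ereal (u_score H f Q cost x {})
            \<ge> ereal Q / (2 * ereal (min (g_cost cost) (R_cost cost)) * OPT H f Q cost)"
proof -
  define m where "m = min (g_cost cost) (R_cost cost)"
  have m1: "1 \<le> m" unfolding m_def by (rule one_le_min_ratio[where cost=cost, OF assms(1,2)])
  have Hne: "H \<noteq> {}"
    using assms(4,6,7) by (intro nonempty_if_consistency_aware[where f=f]) simp_all
  show ?thesis
  proof (cases "{A. feasible H f Q A} = {}")
    case True
    then have "OPT H f Q cost = \<infinity>" unfolding OPT_def True by (simp add: top_ereal_def)
    then have "ereal Q / (2 * ereal m * OPT H f Q cost) = 0" using m1 by simp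
    moreover have "0 \<le> u_score H f Q cost x {}" for x
      using Hne assms(6,3) less_imp_le[OF assms(4)] assms(2) by (rule u_score_empty_nonneg)
    ultimately show ?thesis unfolding m_def by simp
  next
    case False
    then obtain A where A: "feasible H f Q A" "OPT H f Q cost = ereal (alg_cost H cost A)"
      using OPT_attained[OF Hne] by blast
    obtain x where x: "Q / (2 * m * alg_cost H cost A) \<le> u_score H f Q cost x {}"
      using exists_u_score_ge[where cost=cost, OF assms(1-7) A(1)] unfolding m_def by blast
    obtain h where "h \<in> H" using Hne by blast
    then have "0 < alg_cost H cost A"
      using A(1) assms(2,4,6) by (intro alg_cost_pos[where f=f]) auto
    then have "ereal Q / (2 * ereal m * OPT H f Q cost)
        = ereal (Q / (2 * m * alg_cost H cost A))"
      using A(2) m1 by (simp add: ereal_divide)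
    then show ?thesis using x unfolding m_def by auto
  qed
qed

end
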